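(* Let $r\ge 1$ and consider the polynomial algebra $\mathbb{C}[a_u: u\in\mathbb{F}_2^r\setminus\{\mathbf{0}\}]$. Then $$\operatorname{span}_{\mathbb{Z}}\Big\{\sum_{u:\,u\cdot v=1}a_u\ \Big|\ v\in\mathbb{F}_2^r\Big\}=\operatorname{span}_{\mathbb{Z}}\Big\{2^{|S|-1}\sum_{u:\,u_S=d}a_u\ \Big|\ \emptyset\neq S\subseteq[r],\ d\in\mathbb{F}_2^{|S|}\setminus\{\mathbf{0}\}\Big\}.$$
   Context: $[r]=\{1,\dots,r\}$. All sums range over $u\in\mathbb{F}_2^r\setminus\{\mathbf{0}\}$ (the conditions force $u\neq\mathbf{0}$). For $S\subseteq[r]$ and $d\in\mathbb{F}_2^{|S|}$, $u_S=d$ means that the coordinates of $u$ indexed by $S$, listed in increasing order of index, equal the entries of $d$. *)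

theory Defs
  imports Complex_Main
begin

text \<open>A vector u in F_2^r is encoded by its support: a set u of indices with u \<subseteq> {1..r};
  coordinate i of u is 1 iff i \<in> u.\<close>

definition F2vec :: "nat \<Rightarrow> nat set set" where
  "F2vec r = {u. u \<subseteq> {1..r}}"

definition idx :: "nat \<Rightarrow> nat set set" where
  "idx r = {u. u \<subseteq> {1..r} \<and> u \<noteq> {}}"

definition dot_one :: "nat set \<Rightarrow> nat set \<Rightarrow> bool" where
  "dot_one u v \<longleftrightarrow> odd (card (u \<inter> v))"

definition restr_eq :: "nat set \<Rightarrow> nat set \<Rightarrow> bool list \<Rightarrow> bool" where
  "restr_eq u S d \<longleftrightarrow> map (\<lambda>i. i \<in> u) (sorted_list_of_set S) = d"

text \<open>A linear form \<Sum>_{u \<in> idx r, P u} a_u in C[a_u], represented by its coefficient function.\<close>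
definition lin_form :: "nat \<Rightarrow> (nat set \<Rightarrow> bool) \<Rightarrow> (nat set \<Rightarrow> complex)" where
  "lin_form r P = (\<lambda>u. if u \<in> idx r \<and> P u then 1 else 0)"

definition int_span :: "(nat set \<Rightarrow> complex) set \<Rightarrow> (nat set \<Rightarrow> complex) set" where
  "int_span G = {x. \<exists>F c. finite F \<and> F \<subseteq> G \<and>
      x = (\<lambda>u. \<Sum>g\<in>F. of_int (c g) * g u)}"

end

theory Submission
  imports Defs
begin

text \<open>
  Write [P] for the indicator of P and, for d \<in> F_2^|S|, let D \<subseteq> S be the set of positions
  at which d is 1, so that u_S = d means u \<inter> S = D. Each generator of one side is an explicit
  integral combination of generators of the other side.
  Since \<Sum>(-1)^(|T|+1) 2^(|T|-1) over the nonempty T \<subseteq> A equals (1 - (-1)^|A|)/2, we get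
  [|u \<inter> v| odd] = \<Sum>(-1)^(|T|+1) 2^(|T|-1) [T \<subseteq> u] over the nonempty T \<subseteq> v, and
  2^(|T|-1) [T \<subseteq> u] is the generator with S = T and d = (1,...,1).
  Conversely, by orthogonality of characters, \<Sum>(-1)^|w \<inter> X| over w \<subseteq> S is 2^|S| [X \<inter> S = {}];
  applying this to X = D and to the symmetric difference of D and u shows that for nonempty D,
  2^(|S|-1) [u \<inter> S = D] = - \<Sum>(-1)^|w \<inter> D| [|u \<inter> w| odd] over w \<subseteq> S.
\<close>

lemma int_span_base: "g \<in> G \<Longrightarrow> g \<in> int_span G"
  unfolding int_span_def by (intro CollectI exI[of _ "{g}"] exI[of _ "\<lambda>_. 1"]) auto

lemma int_span_zero: "(\<lambda>_. 0) \<in> int_span G"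
  unfolding int_span_def by (intro CollectI exI[of _ "{}"]) auto

lemma int_combination_extend:
  assumes "finite B" "A \<subseteq> B"
  shows "(\<Sum>g\<in>A. of_int (c g) * g u)
       = (\<Sum>g\<in>B. of_int (if g \<in> A then c g else 0) * (g u :: complex))"
  by (rule sum.mono_neutral_cong_left) (use assms in auto)

lemma int_span_add:
  assumes "x \<in> int_span G" "y \<in> int_span G"
  shows "(\<lambda>u. x u + y u) \<in> int_span G"
proof -
  obtain F c where F: "finite F" "F \<subseteq> G" "x = (\<lambda>u. \<Sum>g\<in>F. of_int (c g) * g u)"
    using assms(1) unfolding int_span_def by blast
  obtain F' c' where F': "finite F'" "F' \<subseteq> G" "y = (\<lambda>u. \<Sum>g\<in>F'. of_int (c' g) * g u)"
    using assms(2) unfolding int_span_def by blast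
  define e where "e g = (if g \<in> F then c g else 0) + (if g \<in> F' then c' g else 0)" for g
  have "x u + y u = (\<Sum>g\<in>F \<union> F'. of_int (e g) * g u)" for u
    unfolding F(3) F'(3) e_def
    using int_combination_extend[of "F \<union> F'" F c u] int_combination_extend[of "F \<union> F'" F' c' u]
      F(1) F'(1)
    by (simp add: sum.distrib[symmetric] distrib_right)
  then show ?thesis
    unfolding int_span_def using F F' by (intro CollectI exI[of _ "F \<union> F'"] exI[of _ e]) auto
qed

lemma int_span_scale:
  assumes "x \<in> int_span G"
  shows "(\<lambda>u. of_int k * x u) \<in> int_span G"
proof -
  obtain F c where F: "finite F" "F \<subseteq> G" "x = (\<lambda>u. \<Sum>g\<in>F. of_int (c g) * g u)"
    using assms unfolding int_span_def by blast
  have "of_int k * x u = (\<Sum>g\<in>F. of_int (k * c g) * g u)" for u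
    unfolding F(3) by (simp add: sum_distrib_left mult.assoc)
  then show ?thesis
    unfolding int_span_def using F by (intro CollectI exI[of _ F] exI[of _ "\<lambda>g. k * c g"]) auto
qed

lemma int_span_sum:
  assumes "finite I" "\<And>i. i \<in> I \<Longrightarrow> f i \<in> int_span G"
  shows "(\<lambda>u. \<Sum>i\<in>I. of_int (k i) * f i u) \<in> int_span G"
  using assms
proof (induction I rule: finite_induct)
  case empty
  show ?case using int_span_zero by simp
next
  case (insert a I)
  then show ?case using int_span_add[OF int_span_scale] by simp
qed

lemma int_span_subset_int_span:
  assumes "G \<subseteq> int_span H"
  shows "int_span G \<subseteq> int_span H"
proof
  fix x assume "x \<in> int_span G"
  then obtain F c where F: "finite F" "F \<subseteq> G" "x = (\<lambda>u. \<Sum>g\<in>F. of_int (c g) * g u)"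
    unfolding int_span_def by blast
  show "x \<in> int_span H"
    unfolding F(3) using F(1,2) assms by (intro int_span_sum) auto
qed

lemma prod_sign_eq_power_card_Int:
  assumes "finite w"
  shows "(\<Prod>x\<in>w. if x \<in> A then - 1 else 1 :: 'a :: comm_ring_1) = (- 1) ^ card (w \<inter> A)"
  using assms by (simp add: prod.If_cases Int_def)

lemma power_card_Int_mult_power_card_Int:
  assumes "finite w"
  shows "(- 1 :: 'a :: comm_ring_1) ^ card (w \<inter> A) * (- 1) ^ card (w \<inter> B)
       = (- 1) ^ card (w \<inter> sym_diff A B)"
  unfolding prod_sign_eq_power_card_Int[OF assms, symmetric] prod.distrib[symmetric]
  by (rule prod.cong) auto

lemma sum_Pow_power_card_Int:
  assumes "finite S"
  shows "(\<Sum>w\<in>Pow S. (- 1 :: 'a :: comm_ring_1) ^ card (w \<inter> X))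
       = (if X \<inter> S = {} then 2 ^ card S else 0)"
proof -
  have "(\<Sum>w\<in>Pow S. (- 1 :: 'a) ^ card (w \<inter> X))
      = (\<Prod>x\<in>S. (if x \<in> X then - 1 else 1) + 1)"
    using assms by (simp add: prod_add prod_sign_eq_power_card_Int finite_subset)
  also have "\<dots> = (if X \<inter> S = {} then 2 ^ card S else 0)"
  proof (cases "X \<inter> S = {}")
    case True
    then have "(\<Prod>x\<in>S. (if x \<in> X then - 1 else 1) + 1) = (\<Prod>x\<in>S. 2 :: 'a)"
      by (intro prod.cong) auto
    then show ?thesis using True by simp
  next
    case False
    then show ?thesis using assms by (auto intro!: prod_zero)
  qed
  finally show ?thesis .
qed

lemma sum_Pow_power_card:
  assumes "finite A"
  shows "(\<Sum>T\<in>Pow A. x ^ card T) = (x + 1 :: 'a :: comm_semiring_1) ^ card A"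
  using prod_add[OF assms, of "\<lambda>_. x" "\<lambda>_. 1"] by simp

lemma of_bool_odd_eq: "of_bool (odd k) = (1 - (- 1) ^ k) / (2 :: 'a :: field_char_0)"
  by simp

lemma sum_nonempty_Pow_eq_of_bool_odd_card:
  assumes "finite A"
  shows "(\<Sum>T\<in>Pow A - {{}}. (- 1) ^ (card T + 1) * 2 ^ (card T - 1))
       = (of_bool (odd (card A)) :: 'a :: field_char_0)"
proof -
  have "2 * (\<Sum>T\<in>Pow A - {{}}. (- 1) ^ (card T + 1) * 2 ^ (card T - 1))
      = (\<Sum>T\<in>Pow A - {{}}. - ((- 2 :: 'a) ^ card T))" (is "2 * ?s = _")
    unfolding sum_distrib_left
  proof (rule sum.cong)
    fix T assume "T \<in> Pow A - {{}}"
    then obtain m where "card T = Suc m"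
      using assms by (metis DiffE PowD card_0_eq finite_subset insertI1 not0_implies_Suc)
    then show "2 * ((- 1) ^ (card T + 1) * 2 ^ (card T - 1)) = - ((- 2 :: 'a) ^ card T)"
      by (simp add: power_minus[of "2 :: 'a"])
  qed simp
  also have "\<dots> = 1 - (- 1) ^ card A"
    using assms sum_Pow_power_card[OF assms, of "- 2 :: 'a"]
    by (simp add: sum_negf sum_diff1)
  finally have "2 * ?s = 1 - (- 1) ^ card A" .
  then show ?thesis
    by (cases "even (card A)") simp_all
qed

lemma of_bool_odd_card_Int_expansion:
  assumes "finite v"
  shows "of_bool (odd (card (u \<inter> v)))
       = (\<Sum>T\<in>Pow v - {{}}. (- 1) ^ (card T + 1) * (2 ^ (card T - 1) * of_bool (T \<subseteq> u))
           :: 'a :: field_char_0)"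
proof -
  have "(\<Sum>T\<in>Pow v - {{}}. (- 1) ^ (card T + 1) * (2 ^ (card T - 1) * of_bool (T \<subseteq> u)))
      = (\<Sum>T\<in>Pow v - {{}}. if T \<subseteq> u then (- 1) ^ (card T + 1) * 2 ^ (card T - 1) else 0 :: 'a)"
    by (intro sum.cong) auto
  also have "\<dots> = (\<Sum>T\<in>{T \<in> Pow v - {{}}. T \<subseteq> u}. (- 1) ^ (card T + 1) * 2 ^ (card T - 1))"
    using assms by (intro sum.inter_filter[symmetric]) simp
  also have "{T \<in> Pow v - {{}}. T \<subseteq> u} = Pow (u \<inter> v) - {{}}"
    by auto
  also have "(\<Sum>T\<in>Pow (u \<inter> v) - {{}}. (- 1) ^ (card T + 1) * 2 ^ (card T - 1))
      = (of_bool (odd (card (u \<inter> v))) :: 'a)"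
    using assms by (intro sum_nonempty_Pow_eq_of_bool_odd_card) simp
  finally show ?thesis
    by (rule sym)
qed

lemma of_bool_Int_eq_expansion:
  assumes "finite S" "D \<subseteq> S" "D \<noteq> {}"
  shows "2 ^ (card S - 1) * of_bool (u \<inter> S = D)
       = (\<Sum>w\<in>Pow S. - ((- 1) ^ card (w \<inter> D)) * of_bool (odd (card (u \<inter> w)))
           :: 'a :: field_char_0)"
proof -
  define X where "X = sym_diff D u"
  have "(\<Sum>w\<in>Pow S. - ((- 1) ^ card (w \<inter> D)) * of_bool (odd (card (u \<inter> w))))
      = (\<Sum>w\<in>Pow S. ((- 1) ^ card (w \<inter> X) - (- 1) ^ card (w \<inter> D)) / (2 :: 'a))"
  proof (rule sum.cong)
    fix w assume "w \<in> Pow S"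
    then have "finite w" using assms(1) finite_subset by blast
    moreover have "u \<inter> w = w \<inter> u" by blast
    ultimately show "- ((- 1) ^ card (w \<inter> D)) * of_bool (odd (card (u \<inter> w)))
             = ((- 1) ^ card (w \<inter> X) - (- 1) ^ card (w \<inter> D)) / (2 :: 'a)"
      unfolding X_def of_bool_odd_eq
      by (simp add: power_card_Int_mult_power_card_Int[symmetric] field_simps)
  qed simp
  also have "\<dots> = (if X \<inter> S = {} then 2 ^ card S else 0) / 2"
    using assms
    by (simp add: sum_divide_distrib[symmetric] sum_subtractf sum_Pow_power_card_Int Int_absorb2)
  also have "X \<inter> S = {} \<longleftrightarrow> u \<inter> S = D"
    using assms(2) unfolding X_def by auto
  also obtain n where "card S = Suc n"
    using assms by (metis card_0_eq not0_implies_Suc subset_empty)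
  then have "(if u \<inter> S = D then 2 ^ card S else 0) / 2
      = 2 ^ (card S - 1) * (of_bool (u \<inter> S = D) :: 'a)"
    by simp
  finally show ?thesis
    by (rule sym)
qed

definition pattern_support :: "nat set \<Rightarrow> bool list \<Rightarrow> nat set" where
  "pattern_support S d = {sorted_list_of_set S ! i | i. i < card S \<and> d ! i}"

lemma nth_sorted_list_of_set_in_pattern_support_iff:
  assumes "finite S" "i < card S"
  shows "sorted_list_of_set S ! i \<in> pattern_support S d \<longleftrightarrow> d ! i"
proof
  assume "sorted_list_of_set S ! i \<in> pattern_support S d"
  then obtain j where "j < card S" "d ! j" "sorted_list_of_set S ! i = sorted_list_of_set S ! j"
    unfolding pattern_support_def by blast
  with assms show "d ! i"
    by (metis distinct_sorted_list_of_set length_sorted_list_of_set nth_eq_iff_index_eq)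
qed (use assms in \<open>auto simp: pattern_support_def\<close>)

lemma pattern_support_subset:
  assumes "finite S"
  shows "pattern_support S d \<subseteq> S"
proof -
  have "sorted_list_of_set S ! i \<in> S" if "i < card S" for i
    using assms that nth_mem[of i "sorted_list_of_set S"] by simp
  then show ?thesis
    unfolding pattern_support_def by blast
qed

lemma restr_eq_iff_Int_eq_pattern_support:
  assumes "finite S" "length d = card S"
  shows "restr_eq u S d \<longleftrightarrow> u \<inter> S = pattern_support S d"
proof -
  let ?xs = "sorted_list_of_set S"
  have "restr_eq u S d \<longleftrightarrow> (\<forall>i<card S. (?xs ! i \<in> u) = d ! i)"
    unfolding restr_eq_def using assms by (auto simp: list_eq_iff_nth_eq)
  also have "\<dots> \<longleftrightarrow> (\<forall>i<card S. (?xs ! i \<in> u) = (?xs ! i \<in> pattern_support S d))"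
    using assms(1) by (simp add: nth_sorted_list_of_set_in_pattern_support_iff)
  also have "\<dots> \<longleftrightarrow> (\<forall>x\<in>S. (x \<in> u) = (x \<in> pattern_support S d))"
    using assms(1) in_set_conv_nth[of _ ?xs] by auto
  also have "\<dots> \<longleftrightarrow> u \<inter> S = pattern_support S d"
    using pattern_support_subset[OF assms(1)] by auto
  finally show ?thesis .
qed

lemma pattern_support_eq_empty_iff:
  assumes "finite S" "length d = card S"
  shows "pattern_support S d = {} \<longleftrightarrow> d = replicate (card S) False"
proof -
  have "pattern_support S d = {} \<longleftrightarrow> (\<forall>i<card S. \<not> d ! i)"
    using assms(1) nth_sorted_list_of_set_in_pattern_support_iff
    by (fastforce simp: pattern_support_def)
  also have "\<dots> \<longleftrightarrow> d = replicate (card S) False"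
    using assms(2) by (auto simp: list_eq_iff_nth_eq)
  finally show ?thesis .
qed

lemma pattern_support_replicate_True:
  assumes "finite S"
  shows "pattern_support S (replicate (card S) True) = S"
proof -
  have "pattern_support S (replicate (card S) True)
      = {sorted_list_of_set S ! i | i. i < length (sorted_list_of_set S)}"
    using assms by (auto simp: pattern_support_def)
  also have "\<dots> = S"
    using assms by (metis set_conv_nth set_sorted_list_of_set)
  finally show ?thesis .
qed

lemma lin_form_apply: "lin_form r P u = of_bool (u \<in> idx r) * of_bool (P u)"
  by (simp add: lin_form_def)

definition dot_forms :: "nat \<Rightarrow> (nat set \<Rightarrow> complex) set" where
  "dot_forms r = {lin_form r (\<lambda>u. dot_one u v) | v. v \<in> F2vec r}"

definition restr_forms :: "nat \<Rightarrow> (nat set \<Rightarrow> complex) set" where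
  "restr_forms r = {(\<lambda>u. 2 ^ (card S - 1) * lin_form r (\<lambda>u. restr_eq u S d) u) | S d.
     S \<noteq> {} \<and> S \<subseteq> {1..r} \<and> length d = card S \<and> d \<noteq> replicate (card S) False}"

lemma dot_forms_subset_int_span_restr_forms: "dot_forms r \<subseteq> int_span (restr_forms r)"
proof
  fix x assume "x \<in> dot_forms r"
  then obtain v where v: "v \<subseteq> {1..r}" and x: "x = lin_form r (\<lambda>u. dot_one u v)"
    unfolding dot_forms_def F2vec_def by blast
  then have "finite v"
    using finite_subset by blast
  define M where "M T = (\<lambda>u. 2 ^ (card T - 1) * lin_form r (\<lambda>u. T \<subseteq> u) u)" for T
  have M_in: "M T \<in> restr_forms r" if "T \<in> Pow v - {{}}" for T
  proof -
    have T: "T \<noteq> {}" "T \<subseteq> {1..r}" "finite T"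
      using that v \<open>finite v\<close> finite_subset by auto
    have "restr_eq u T (replicate (card T) True) \<longleftrightarrow> T \<subseteq> u" for u
      using T(3) by (auto simp: restr_eq_iff_Int_eq_pattern_support pattern_support_replicate_True)
    then have M_eq: "M T = (\<lambda>u. 2 ^ (card T - 1) *
        lin_form r (\<lambda>u. restr_eq u T (replicate (card T) True)) u)"
      by (simp add: M_def)
    have "replicate (card T) True \<noteq> replicate (card T) False"
      using T by (simp add: card_gt_0_iff)
    then show ?thesis
      unfolding M_eq restr_forms_def using T
      by (intro CollectI exI[of _ T] exI[of _ "replicate (card T) True"]) simp
  qed
  have x_eq: "x = (\<lambda>u. \<Sum>T\<in>Pow v - {{}}. of_int ((- 1) ^ (card T + 1)) * M T u)"
  proof
    fix u
    have "x u = of_bool (u \<in> idx r) * of_bool (odd (card (u \<inter> v)))"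
      by (simp add: x lin_form_apply dot_one_def)
    also have "\<dots> = of_bool (u \<in> idx r) * (\<Sum>T\<in>Pow v - {{}}.
        (- 1) ^ (card T + 1) * (2 ^ (card T - 1) * of_bool (T \<subseteq> u)))"
      by (simp only: of_bool_odd_card_Int_expansion[OF \<open>finite v\<close>])
    also have "\<dots> = (\<Sum>T\<in>Pow v - {{}}. of_int ((- 1) ^ (card T + 1)) * M T u)"
      by (simp add: sum_distrib_left M_def lin_form_apply mult_ac)
    finally show "x u = (\<Sum>T\<in>Pow v - {{}}. of_int ((- 1) ^ (card T + 1)) * M T u)" .
  qed
  show "x \<in> int_span (restr_forms r)"
    unfolding x_eq using \<open>finite v\<close> M_in by (intro int_span_sum int_span_base) auto
qed

lemma restr_forms_subset_int_span_dot_forms: "restr_forms r \<subseteq> int_span (dot_forms r)"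
proof
  fix x assume "x \<in> restr_forms r"
  then obtain S d where S: "S \<noteq> {}" "S \<subseteq> {1..r}"
    and d: "length d = card S" "d \<noteq> replicate (card S) False"
    and x: "x = (\<lambda>u. 2 ^ (card S - 1) * lin_form r (\<lambda>u. restr_eq u S d) u)"
    unfolding restr_forms_def by blast
  have "finite S"
    using S(2) finite_subset by blast
  define D where "D = pattern_support S d"
  have D: "D \<subseteq> S" "D \<noteq> {}"
    using pattern_support_subset pattern_support_eq_empty_iff \<open>finite S\<close> d unfolding D_def by auto
  define L where "L w = lin_form r (\<lambda>u. dot_one u w)" for w
  have L_in: "L w \<in> dot_forms r" if "w \<in> Pow S" for w
    using that S(2) unfolding L_def dot_forms_def F2vec_def by auto
  have x_eq: "x = (\<lambda>u. \<Sum>w\<in>Pow S. of_int (- ((- 1) ^ card (w \<inter> D))) * L w u)"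
  proof
    fix u
    have "x u = of_bool (u \<in> idx r) * (2 ^ (card S - 1) * of_bool (u \<inter> S = D))"
      by (simp add: x lin_form_apply D_def
          restr_eq_iff_Int_eq_pattern_support[OF \<open>finite S\<close> d(1)])
    also have "\<dots> = of_bool (u \<in> idx r) * (\<Sum>w\<in>Pow S.
        - ((- 1) ^ card (w \<inter> D)) * of_bool (odd (card (u \<inter> w))))"
      by (simp only: of_bool_Int_eq_expansion[OF \<open>finite S\<close> D])
    also have "\<dots> = (\<Sum>w\<in>Pow S. of_int (- ((- 1) ^ card (w \<inter> D))) * L w u)"
      by (simp add: sum_distrib_left L_def lin_form_apply dot_one_def mult_ac)
    finally show "x u = (\<Sum>w\<in>Pow S. of_int (- ((- 1) ^ card (w \<inter> D))) * L w u)" .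
  qed
  show "x \<in> int_span (dot_forms r)"
    unfolding x_eq using \<open>finite S\<close> L_in by (intro int_span_sum int_span_base) auto
qed

theorem mainTheorem9:
  fixes r :: nat
  assumes "r \<ge> 1"
  shows "int_span {lin_form r (\<lambda>u. dot_one u v) | v. v \<in> F2vec r}
       = int_span {(\<lambda>u. 2 ^ (card S - 1) * lin_form r (\<lambda>u. restr_eq u S d) u) | S d.
            S \<noteq> {} \<and> S \<subseteq> {1..r} \<and> length d = card S \<and> d \<noteq> replicate (card S) False}"
proof -
  have "int_span (dot_forms r) = int_span (restr_forms r)"
    by (intro antisym int_span_subset_int_span
        dot_forms_subset_int_span_restr_forms restr_forms_subset_int_span_dot_forms)
  then show ?thesis
    unfolding dot_forms_def restr_forms_def .
qed

end
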